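(* Let $p$ and $q$ be distinct primes. (i) If $n = p^2 q$ (with $p, q \geq 2$), then $\Gamma(\mathbb{Z}_n)$ is very cost effective. (ii) If $n = p^2 q^2$ with $p, q \geq 3$ and $p < q$, then $\Gamma(\mathbb{Z}_n)$ is very cost effective.
   Context: $\mathbb{Z}_n$ is the ring of residue classes modulo $n$. The zero-divisor graph $\Gamma(\mathbb{Z}_n)$ has as vertices the nonzero zero-divisors of $\mathbb{Z}_n$, two distinct vertices being adjacent iff their product is $0$. For a graph $G=(V,E)$ and $S\subseteq V$, a vertex $v\in S$ is very cost effective if $|N(v)\cap S| < |N(v)\cap (V\setminus S)|$, where $N(v)$ is the open neighborhood of $v$; $S$ is very cost effective if every vertex of $S$ is. A bipartition $\{S, V\setminus S\}$ is very cost effective if both parts are very cost effective sets, and $G$ is very cost effective if it has a very cost effective bipartition. *)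

theory Defs
  imports Main "HOL-Computational_Algebra.Primes"
begin

definition nbhd :: "'a set \<Rightarrow> ('a \<Rightarrow> 'a \<Rightarrow> bool) \<Rightarrow> 'a \<Rightarrow> 'a set" where
  "nbhd V adj v = {u \<in> V. adj v u}"

definition very_cost_effective_vertex ::
  "'a set \<Rightarrow> ('a \<Rightarrow> 'a \<Rightarrow> bool) \<Rightarrow> 'a set \<Rightarrow> 'a \<Rightarrow> bool" where
  "very_cost_effective_vertex V adj S v \<longleftrightarrow>
     card (nbhd V adj v \<inter> S) < card (nbhd V adj v \<inter> (V - S))"

definition very_cost_effective_set ::
  "'a set \<Rightarrow> ('a \<Rightarrow> 'a \<Rightarrow> bool) \<Rightarrow> 'a set \<Rightarrow> bool" where
  "very_cost_effective_set V adj S \<longleftrightarrow>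
     S \<subseteq> V \<and> (\<forall>v\<in>S. very_cost_effective_vertex V adj S v)"

definition very_cost_effective_graph ::
  "'a set \<Rightarrow> ('a \<Rightarrow> 'a \<Rightarrow> bool) \<Rightarrow> bool" where
  "very_cost_effective_graph V adj \<longleftrightarrow>
     (\<exists>S. S \<subseteq> V \<and> very_cost_effective_set V adj S
          \<and> very_cost_effective_set V adj (V - S))"

text \<open>Zero-divisor graph of Z_n, residues represented by 0..n-1.
  Vertices: nonzero zero-divisors; edges: distinct vertices with product 0 mod n.\<close>
definition zd_vertices :: "nat \<Rightarrow> nat set" where
  "zd_vertices n = {a. 0 < a \<and> a < n \<and> (\<exists>b. 0 < b \<and> b < n \<and> n dvd a * b)}"

definition zd_adj :: "nat \<Rightarrow> nat \<Rightarrow> nat \<Rightarrow> bool" where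
  "zd_adj n a b \<longleftrightarrow> a \<noteq> b \<and> n dvd a * b"

end

theory Submission
  imports Defs
begin

text \<open>
  For n = p^2 q split the vertices into the multiples of q and the rest. A multiple of q
  prime to p is adjacent only to multiples of p^2 prime to q, and a non-multiple of q only
  to multiples of q, so these vertices have all their neighbours in the other part. A
  multiple of p q has at most p - 1 neighbours among the multiples of q, but all p (q - 1)
  multiples of p prime to q are neighbours outside.

  For n = p^2 q^2, v b = 0 iff at both p and q the exponents of v and b, capped at 2, add up
  to at least 2. Let T be half of the p q - 1 nonzero multiples of p q, taken among those
  divisible by neither p^2 nor q^2; there are (p - 1)(q - 1) of these, enough once p, q \<ge> 3.
  One part is T together with the vertices not divisible by p q, except the multiples of q^2
  prime to p. Its vertices outside T have no neighbour in it; every other vertex is settled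
  by comparing T with its complement among the multiples of p q, together with counts of
  multiples of p^2 or q^2.
\<close>

lemma coprime_mult_dvd_iff:
  fixes a b c :: nat
  assumes "coprime a b"
  shows "a * b dvd c \<longleftrightarrow> a dvd c \<and> b dvd c"
  using assms by (blast intro: divides_mult dest: dvd_mult_left dvd_mult_right)

lemma square_dvd_imp_dvd: "(a::nat)^2 dvd b \<Longrightarrow> a dvd b"
  using power_le_dvd[of a 2 b 1] by simp

lemma prime_square_dvd_mult_iff:
  fixes p a b :: nat
  assumes "prime p"
  shows "p^2 dvd a * b \<longleftrightarrow> p^2 dvd a \<or> p^2 dvd b \<or> p dvd a \<and> p dvd b"
proof
  assume ab: "p^2 dvd a * b"
  show "p^2 dvd a \<or> p^2 dvd b \<or> p dvd a \<and> p dvd b"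
  proof (cases "p dvd a")
    case False
    then have "coprime (p^2) a"
      using assms by (simp add: prime_imp_coprime)
    then show ?thesis
      using ab by (simp add: coprime_dvd_mult_right_iff)
  next
    case True
    then obtain c where a: "a = p * c" ..
    then have "p dvd c * b"
      using ab assms by (simp add: power2_eq_square mult.assoc prime_gt_0_nat)
    then show ?thesis
      using a assms by (auto simp: power2_eq_square prime_dvd_mult_iff)
  qed
qed (auto simp: power2_eq_square mult_dvd_mono)

lemma card_multiples_below:
  fixes m c :: nat
  assumes "0 < m"
  shows "card {b. 0 < b \<and> b < m * c \<and> m dvd b} = c - 1"
proof -
  have "{b. 0 < b \<and> b < m * c \<and> m dvd b} = (\<lambda>j. m * j) ` {1..<c}"
    using assms by (auto simp: dvd_def)
  moreover have "inj_on (\<lambda>j. m * j) {1..<c}"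
    using assms by (simp add: inj_on_def)
  ultimately show ?thesis
    by (simp add: card_image)
qed

lemma card_multiples_not_multiples:
  fixes m k c :: nat
  assumes "0 < m" "0 < k"
  shows "card {b. 0 < b \<and> b < m * k * c \<and> m dvd b \<and> \<not> m * k dvd b} = (k * c - 1) - (c - 1)"
proof -
  let ?M = "\<lambda>d e. {b. 0 < b \<and> b < d * e \<and> d dvd b}"
  have "{b. 0 < b \<and> b < m * k * c \<and> m dvd b \<and> \<not> m * k dvd b} = ?M m (k * c) - ?M (m * k) c"
    by (auto simp: mult.assoc dest: dvd_mult_left)
  moreover have "?M (m * k) c \<subseteq> ?M m (k * c)"
    by (auto simp: mult.assoc dest: dvd_mult_left)
  moreover have "finite (?M (m * k) c)"
    by (rule finite_subset[of _ "{..<m * k * c}"]) auto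
  ultimately show ?thesis
    using assms by (simp add: card_Diff_subset card_multiples_below)
qed

lemma dvd_less_mult_imp_add_le:
  fixes m b c :: nat
  assumes "m dvd b" "b < m * c"
  shows "b + m \<le> m * c"
proof -
  obtain j where j: "b = m * j"
    using assms(1) ..
  then have "j < c"
    using assms(2) by simp
  then show ?thesis
    using j mult_le_mono2[of "j + 1" c m] by simp
qed

lemma zd_vertices_subset: "zd_vertices n \<subseteq> {0<..<n}"
  unfolding zd_vertices_def by auto

lemma finite_nbhd_zd: "finite (nbhd (zd_vertices n) (zd_adj n) v)"
proof (rule finite_subset)
  show "nbhd (zd_vertices n) (zd_adj n) v \<subseteq> {0<..<n}"
    using zd_vertices_subset unfolding nbhd_def by blast
qed simp

lemma nbhd_subset: "nbhd V adj v \<subseteq> V"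
  unfolding nbhd_def by blast

lemma zd_vertex_not_multiple: "a \<in> zd_vertices n \<Longrightarrow> \<not> n dvd a"
  unfolding zd_vertices_def by (auto dest: nat_dvd_not_less)

lemma mem_nbhd_zd_iff:
  assumes "v \<in> zd_vertices n"
  shows "b \<in> nbhd (zd_vertices n) (zd_adj n) v \<longleftrightarrow> 0 < b \<and> b < n \<and> b \<noteq> v \<and> n dvd v * b"
  using assms unfolding nbhd_def zd_vertices_def zd_adj_def by (auto simp: mult.commute)

lemma zd_vertex_not_coprime:
  assumes "a \<in> zd_vertices n"
  shows "\<not> coprime a n"
proof
  assume "coprime a n"
  obtain b where "0 < b" "b < n" "n dvd a * b"
    using assms unfolding zd_vertices_def by blast
  with \<open>coprime a n\<close> show False
    by (auto simp: coprime_commute coprime_dvd_mult_right_iff dest: nat_dvd_not_less)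
qed

lemma nbhd_zd_nonempty:
  assumes v: "v \<in> zd_vertices n" and "\<not> n dvd v^2"
  shows "nbhd (zd_vertices n) (zd_adj n) v \<noteq> {}"
proof -
  define g where "g = gcd v n"
  have "0 < v" "v < n"
    using v unfolding zd_vertices_def by auto
  then have "1 < g"
    using zd_vertex_not_coprime[OF v] unfolding g_def
    by (auto simp: coprime_iff_gcd_eq_1 nat_neq_iff)
  obtain k where n: "n = g * k"
    unfolding g_def by (rule dvdE[OF gcd_dvd2])
  obtain w where "v = g * w"
    unfolding g_def by (rule dvdE[OF gcd_dvd1])
  then have "n dvd v * k"
    using n by simp
  moreover have "0 < k"
    using n \<open>v < n\<close> by (cases "k = 0") simp_all
  moreover from this have "k < n"
    using n \<open>1 < g\<close> by simp
  moreover have "k \<noteq> v"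
    using \<open>n dvd v * k\<close> assms(2) by (auto simp: power2_eq_square)
  ultimately show ?thesis
    using mem_nbhd_zd_iff[OF v] by blast
qed

lemma very_cost_effective_vertex_zdI:
  assumes v: "v \<in> zd_vertices n" and "\<not> n dvd v^2"
    and "nbhd (zd_vertices n) (zd_adj n) v \<inter> S = {}"
  shows "very_cost_effective_vertex (zd_vertices n) (zd_adj n) S v"
proof -
  let ?N = "nbhd (zd_vertices n) (zd_adj n) v"
  have "?N \<inter> (zd_vertices n - S) = ?N"
    using assms(3) unfolding nbhd_def by blast
  then show ?thesis
    using assms(3) nbhd_zd_nonempty[OF assms(1,2)] finite_nbhd_zd
    unfolding very_cost_effective_vertex_def by (simp add: card_gt_0_iff)
qed

lemma very_cost_effective_graphI:
  assumes "S \<subseteq> V"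
    and "\<And>v. v \<in> S \<Longrightarrow> very_cost_effective_vertex V adj S v"
    and "\<And>v. v \<in> V - S \<Longrightarrow> very_cost_effective_vertex V adj (V - S) v"
  shows "very_cost_effective_graph V adj"
  using assms unfolding very_cost_effective_graph_def very_cost_effective_set_def by blast

locale two_primes =
  fixes p q :: nat
  assumes prime_p: "prime p" and prime_q: "prime q" and p_neq_q: "p \<noteq> q"
begin

lemma p_gt_1: "1 < p" and q_gt_1: "1 < q"
  using prime_p prime_q prime_gt_1_nat by auto

lemma pq_gt_1: "1 < p * q"
  using p_gt_1 q_gt_1 by (simp add: one_less_mult)

lemma coprime_p_q: "coprime p q"
  using prime_p prime_q p_neq_q by (simp add: primes_coprime)

lemma q_not_dvd_p: "\<not> q dvd p"
  using prime_p prime_q p_neq_q primes_dvd_imp_eq by blast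

lemma p2q_dvd_mult_iff:
  "p^2 * q dvd a * b \<longleftrightarrow> (p^2 dvd a \<or> p^2 dvd b \<or> p dvd a \<and> p dvd b) \<and> (q dvd a \<or> q dvd b)"
  using coprime_p_q prime_p prime_q
  by (simp add: coprime_mult_dvd_iff prime_square_dvd_mult_iff prime_dvd_mult_iff)

lemma p2q_dvd_square_iff: "p^2 * q dvd a^2 \<longleftrightarrow> p * q dvd a"
  using coprime_p_q prime_q by (simp add: coprime_mult_dvd_iff prime_dvd_power_iff)

lemma p2q_vertex_coprime_to_p:
  assumes v: "v \<in> zd_vertices (p^2 * q)" and "q dvd v" "\<not> p dvd v"
  shows "very_cost_effective_vertex (zd_vertices (p^2 * q)) (zd_adj (p^2 * q))
           {v \<in> zd_vertices (p^2 * q). q dvd v} v"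
proof (rule very_cost_effective_vertex_zdI[OF v])
  show "\<not> p^2 * q dvd v^2"
    using assms(3) by (auto simp: p2q_dvd_square_iff dest: dvd_mult_left)
  have "\<not> p^2 * q dvd b" if "0 < b" "b < p^2 * q" for b
    using that by (auto dest: nat_dvd_not_less)
  then show "nbhd (zd_vertices (p^2 * q)) (zd_adj (p^2 * q)) v \<inter> {v \<in> zd_vertices (p^2 * q). q dvd v} = {}"
    using assms(3) coprime_p_q
    by (auto simp: mem_nbhd_zd_iff[OF v] p2q_dvd_mult_iff coprime_mult_dvd_iff dest: square_dvd_imp_dvd)
qed

lemma p2q_vertex_coprime_to_q:
  assumes v: "v \<in> zd_vertices (p^2 * q)" and "\<not> q dvd v"
  shows "very_cost_effective_vertex (zd_vertices (p^2 * q)) (zd_adj (p^2 * q))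
           (zd_vertices (p^2 * q) - {v \<in> zd_vertices (p^2 * q). q dvd v}) v"
proof (rule very_cost_effective_vertex_zdI[OF v])
  show "\<not> p^2 * q dvd v^2"
    using assms(2) by (auto simp: p2q_dvd_square_iff dest: dvd_mult_right)
  show "nbhd (zd_vertices (p^2 * q)) (zd_adj (p^2 * q)) v
          \<inter> (zd_vertices (p^2 * q) - {v \<in> zd_vertices (p^2 * q). q dvd v}) = {}"
    using assms(2) by (auto simp: mem_nbhd_zd_iff[OF v] p2q_dvd_mult_iff)
qed

lemma p2q_vertex_not_dvd_p2:
  assumes "v \<in> zd_vertices (p^2 * q)" and "q dvd v"
  shows "\<not> p^2 dvd v"
  using zd_vertex_not_multiple[OF assms(1)] assms(2) coprime_p_q by (auto simp: coprime_mult_dvd_iff)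

lemma p2q_vertex_multiple_of_pq:
  assumes v: "v \<in> zd_vertices (p^2 * q)" and "p * q dvd v"
  shows "very_cost_effective_vertex (zd_vertices (p^2 * q)) (zd_adj (p^2 * q))
           {v \<in> zd_vertices (p^2 * q). q dvd v} v"
proof -
  let ?V = "zd_vertices (p^2 * q)" and ?S = "{v \<in> zd_vertices (p^2 * q). q dvd v}"
  let ?N = "nbhd ?V (zd_adj (p^2 * q)) v"
  define M\<^sub>p\<^sub>q where "M\<^sub>p\<^sub>q = {b. 0 < b \<and> b < p * q * p \<and> p * q dvd b}"
  define R where "R = {b. 0 < b \<and> b < p * q * p \<and> p dvd b \<and> \<not> p * q dvd b}"
  have n: "p^2 * q = p * q * p"
    by (simp add: power2_eq_square ac_simps)
  have "\<not> p^2 dvd v"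
    using p2q_vertex_not_dvd_p2[OF v] assms(2) by (auto dest: dvd_mult_right)
  then have "?N \<inter> ?S \<subseteq> M\<^sub>p\<^sub>q"
    using coprime_p_q by (auto simp: mem_nbhd_zd_iff[OF v] M\<^sub>p\<^sub>q_def n[symmetric]
        p2q_dvd_mult_iff coprime_mult_dvd_iff dest: square_dvd_imp_dvd)
  then have "card (?N \<inter> ?S) \<le> p - 1"
    using card_mono[of M\<^sub>p\<^sub>q] card_multiples_below[of "p * q" p] p_gt_1 q_gt_1
    unfolding M\<^sub>p\<^sub>q_def by fastforce
  have "R \<subseteq> ?N \<inter> (?V - ?S)"
  proof
    fix b assume b: "b \<in> R"
    then have "\<not> q dvd b"
      using coprime_p_q by (auto simp: R_def coprime_mult_dvd_iff)
    moreover have "p^2 * q dvd v * b"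
      using b assms(2) by (auto simp: R_def p2q_dvd_mult_iff dest: dvd_mult_left dvd_mult_right)
    moreover have "b \<noteq> v"
      using \<open>\<not> q dvd b\<close> assms(2) by (auto dest: dvd_mult_right)
    ultimately have "b \<in> ?N"
      using b by (auto simp: R_def n[symmetric] mem_nbhd_zd_iff[OF v])
    then show "b \<in> ?N \<inter> (?V - ?S)"
      using nbhd_subset[of ?V _ v] \<open>\<not> q dvd b\<close> by blast
  qed
  moreover have "card R = (q * p - 1) - (p - 1)"
    unfolding R_def using card_multiples_not_multiples[of p q p] p_gt_1 q_gt_1 by simp
  moreover have "p - 1 < (q * p - 1) - (p - 1)"
    using p_gt_1 q_gt_1 mult_le_mono1[of 2 q p] by arith
  ultimately have "p - 1 < card (?N \<inter> (?V - ?S))"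
    using card_mono[of "?N \<inter> (?V - ?S)" R] finite_nbhd_zd by fastforce
  then show ?thesis
    using \<open>card (?N \<inter> ?S) \<le> p - 1\<close> unfolding very_cost_effective_vertex_def by linarith
qed

theorem very_cost_effective_zd_p2q:
  "very_cost_effective_graph (zd_vertices (p^2 * q)) (zd_adj (p^2 * q))"
proof (rule very_cost_effective_graphI[where S = "{v \<in> zd_vertices (p^2 * q). q dvd v}"])
  fix v assume "v \<in> {v \<in> zd_vertices (p^2 * q). q dvd v}"
  then show "very_cost_effective_vertex (zd_vertices (p^2 * q)) (zd_adj (p^2 * q))
               {v \<in> zd_vertices (p^2 * q). q dvd v} v"
    using p2q_vertex_coprime_to_p p2q_vertex_multiple_of_pq coprime_p_q
    by (cases "p dvd v") (auto simp: coprime_mult_dvd_iff)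
qed (auto intro: p2q_vertex_coprime_to_q)

lemma p2q2_dvd_mult_iff:
  "p^2 * q^2 dvd a * b \<longleftrightarrow>
     (p^2 dvd a \<or> p^2 dvd b \<or> p dvd a \<and> p dvd b) \<and> (q^2 dvd a \<or> q^2 dvd b \<or> q dvd a \<and> q dvd b)"
  using coprime_p_q prime_p prime_q by (simp add: coprime_mult_dvd_iff prime_square_dvd_mult_iff)

lemma p2q2_dvd_square_iff: "p^2 * q^2 dvd a^2 \<longleftrightarrow> p * q dvd a"
  by (metis pow_divides_pow_iff power_mult_distrib zero_less_numeral)

definition pq_multiples :: "nat set" where
  "pq_multiples = {b. 0 < b \<and> b < p^2 * q^2 \<and> p * q dvd b}"

definition pq_unit_multiples :: "nat set" where
  "pq_unit_multiples = {b \<in> pq_multiples. \<not> p^2 dvd b \<and> \<not> q^2 dvd b}"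

lemma finite_pq_multiples: "finite pq_multiples"
  unfolding pq_multiples_def by (rule finite_subset[of _ "{..<p^2 * q^2}"]) auto

lemma card_pq_multiples: "card pq_multiples = p * q - 1"
proof -
  have "p^2 * q^2 = p * q * (p * q)"
    by (simp add: power2_eq_square ac_simps)
  then show ?thesis
    using card_multiples_below[of "p * q" "p * q"] p_gt_1 q_gt_1 by (simp add: pq_multiples_def)
qed

lemma card_pq_unit_multiples: "card pq_unit_multiples = (p - 1) * (q - 1)"
proof -
  define M\<^sub>p\<^sub>p\<^sub>q where "M\<^sub>p\<^sub>p\<^sub>q = {b. 0 < b \<and> b < p^2 * q * q \<and> p^2 * q dvd b}"
  define M\<^sub>p\<^sub>q\<^sub>q where "M\<^sub>p\<^sub>q\<^sub>q = {b. 0 < b \<and> b < p * q^2 * p \<and> p * q^2 dvd b}"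
  have n: "p^2 * q^2 = p^2 * q * q" "p^2 * q^2 = p * q^2 * p"
    by (simp_all add: power2_eq_square ac_simps)
  have "pq_unit_multiples = pq_multiples - (M\<^sub>p\<^sub>p\<^sub>q \<union> M\<^sub>p\<^sub>q\<^sub>q)"
    using coprime_p_q n
    by (auto simp: pq_unit_multiples_def pq_multiples_def M\<^sub>p\<^sub>p\<^sub>q_def M\<^sub>p\<^sub>q\<^sub>q_def coprime_mult_dvd_iff
        power2_eq_square dest: dvd_mult_left)
  moreover have "M\<^sub>p\<^sub>p\<^sub>q \<union> M\<^sub>p\<^sub>q\<^sub>q \<subseteq> pq_multiples"
    using n by (auto simp: pq_multiples_def M\<^sub>p\<^sub>p\<^sub>q_def M\<^sub>p\<^sub>q\<^sub>q_def power2_eq_square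
        intro: dvd_trans[rotated])
  moreover have "M\<^sub>p\<^sub>p\<^sub>q \<inter> M\<^sub>p\<^sub>q\<^sub>q = {}"
  proof -
    have "p^2 * q^2 dvd b" if "b \<in> M\<^sub>p\<^sub>p\<^sub>q" "b \<in> M\<^sub>p\<^sub>q\<^sub>q" for b
      using that coprime_p_q by (auto simp: M\<^sub>p\<^sub>p\<^sub>q_def M\<^sub>p\<^sub>q\<^sub>q_def coprime_mult_dvd_iff)
    then show ?thesis
      using n(1) by (auto simp: M\<^sub>p\<^sub>p\<^sub>q_def dest: nat_dvd_not_less)
  qed
  moreover have "card M\<^sub>p\<^sub>p\<^sub>q = q - 1" "card M\<^sub>p\<^sub>q\<^sub>q = p - 1"
    using card_multiples_below p_gt_1 q_gt_1 by (simp_all add: M\<^sub>p\<^sub>p\<^sub>q_def M\<^sub>p\<^sub>q\<^sub>q_def)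
  moreover have "finite (M\<^sub>p\<^sub>p\<^sub>q \<union> M\<^sub>p\<^sub>q\<^sub>q)"
    using calculation(2) finite_pq_multiples finite_subset by blast
  ultimately have "card pq_unit_multiples = (p * q - 1) - ((q - 1) + (p - 1))"
    using card_pq_multiples by (simp add: card_Diff_subset card_Un_disjoint)
  moreover obtain a b where "p = Suc a" "q = Suc b"
    using p_gt_1 q_gt_1 by (metis less_imp_Suc_add)
  ultimately show ?thesis
    by (simp add: algebra_simps)
qed

lemma obtain_half_of_pq_unit_multiples:
  assumes "3 \<le> p" "3 \<le> q"
  obtains T where "T \<subseteq> pq_unit_multiples" "2 * card T = p * q - 1"
proof -
  have "odd (p * q)"
    using assms prime_p prime_q prime_odd_nat by simp
  then have half: "2 * ((p * q - 1) div 2) = p * q - 1"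
    by presburger
  obtain a b where ab: "p = a + 3" "q = b + 3"
    using assms by (metis add.commute le_Suc_ex)
  have "p * q - 1 \<le> 2 * ((p - 1) * (q - 1))"
    unfolding ab by (simp add: algebra_simps)
  then have "(p * q - 1) div 2 \<le> card pq_unit_multiples"
    unfolding card_pq_unit_multiples by linarith
  then obtain T where "T \<subseteq> pq_unit_multiples" "card T = (p * q - 1) div 2"
    by (rule obtain_subset_with_card_n)
  with half show thesis
    using that by simp
qed

end

locale p2q2_split = two_primes +
  fixes T :: "nat set"
  assumes p_less_q: "p < q"
    and T_subset: "T \<subseteq> pq_unit_multiples"
    and card_T: "2 * card T = p * q - 1"
begin

abbreviation V :: "nat set" where
  "V \<equiv> zd_vertices (p^2 * q^2)"

abbreviation N :: "nat \<Rightarrow> nat set" where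
  "N v \<equiv> nbhd V (zd_adj (p^2 * q^2)) v"

definition S :: "nat set" where
  "S = {v \<in> V. \<not> p * q dvd v \<and> (p dvd v \<or> \<not> q^2 dvd v)} \<union> T"

lemma T_elem:
  assumes "b \<in> T"
  shows "0 < b" "b < p^2 * q^2" "p dvd b" "q dvd b" "\<not> p^2 dvd b" "\<not> q^2 dvd b"
  using assms T_subset
  by (auto simp: pq_unit_multiples_def pq_multiples_def dest: dvd_mult_left dvd_mult_right)

lemma pq_multiples_subset_V: "pq_multiples \<subseteq> V"
proof
  fix b assume b: "b \<in> pq_multiples"
  then obtain k where "b = p * q * k"
    unfolding pq_multiples_def by blast
  moreover have n: "p^2 * q^2 = p * q * (p * q)"
    by (simp add: power2_eq_square ac_simps)
  ultimately have "p^2 * q^2 dvd b * (p * q)"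
    by simp
  moreover have "0 < p * q" "p * q < p^2 * q^2"
    using pq_gt_1 p_gt_1 q_gt_1 mult_strict_left_mono[of 1 "p * q" "p * q"] unfolding n by auto
  ultimately show "b \<in> V"
    using b unfolding zd_vertices_def pq_multiples_def by blast
qed

lemma T_subset_pq_multiples: "T \<subseteq> pq_multiples"
  using T_subset unfolding pq_unit_multiples_def by blast

lemma S_subset_V: "S \<subseteq> V"
  using T_subset_pq_multiples pq_multiples_subset_V unfolding S_def by blast

lemma finite_T: "finite T"
  using T_subset_pq_multiples finite_pq_multiples by (rule finite_subset)

lemma card_pq_multiples_diff_T: "card (pq_multiples - T) = card T"
  using card_T card_pq_multiples T_subset_pq_multiples finite_T by (simp add: card_Diff_subset)

lemma card_T_pos: "0 < card T"
  using card_T pq_gt_1 by arith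

lemma vertex_in_T:
  assumes v: "v \<in> T"
  shows "very_cost_effective_vertex V (zd_adj (p^2 * q^2)) S v"
proof -
  have vV: "v \<in> V"
    using v T_subset_pq_multiples pq_multiples_subset_V by blast
  have "N v \<inter> S \<subseteq> T - {v}"
    using T_elem[OF v] coprime_p_q
    by (auto simp: mem_nbhd_zd_iff[OF vV] S_def p2q2_dvd_mult_iff coprime_mult_dvd_iff
        dest: square_dvd_imp_dvd)
  then have "card (N v \<inter> S) < card T"
    using card_mono[OF _ \<open>N v \<inter> S \<subseteq> T - {v}\<close>] finite_T v card_T_pos by fastforce
  moreover have "pq_multiples - T \<subseteq> N v \<inter> (V - S)"
  proof
    fix b assume b: "b \<in> pq_multiples - T"
    then have "p^2 * q^2 dvd v * b"
      using T_elem[OF v] by (auto simp: pq_multiples_def p2q2_dvd_mult_iff dest: dvd_mult_left dvd_mult_right)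
    then have "b \<in> N v"
      using b v by (auto simp: mem_nbhd_zd_iff[OF vV] pq_multiples_def)
    then show "b \<in> N v \<inter> (V - S)"
      using b nbhd_subset[of V _ v] by (auto simp: S_def pq_multiples_def)
  qed
  then have "card T \<le> card (N v \<inter> (V - S))"
    using card_mono[OF _ \<open>pq_multiples - T \<subseteq> N v \<inter> (V - S)\<close>] finite_nbhd_zd
      card_pq_multiples_diff_T by simp
  ultimately show ?thesis
    unfolding very_cost_effective_vertex_def by linarith
qed

lemma vertex_in_S_minus_T:
  assumes v: "v \<in> S - T"
  shows "very_cost_effective_vertex V (zd_adj (p^2 * q^2)) S v"
proof -
  have vV: "v \<in> V" and v_dvd: "\<not> p * q dvd v" "p dvd v \<or> \<not> q^2 dvd v"
    using v by (auto simp: S_def)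
  have "\<not> p^2 * q^2 dvd v * b" if "b \<in> S" for b
    using v_dvd that T_elem[of b] coprime_p_q
    by (auto simp: S_def p2q2_dvd_mult_iff coprime_mult_dvd_iff dest: square_dvd_imp_dvd)
  then show ?thesis
    using v_dvd(1)
    by (intro very_cost_effective_vertex_zdI[OF vV]) (auto simp: p2q2_dvd_square_iff mem_nbhd_zd_iff[OF vV])
qed

lemma V_diff_complement: "V - (V - S) = S"
  using S_subset_V by blast

lemma vertex_outside_S_pq:
  assumes v: "v \<in> V - S" and "p * q dvd v" "\<not> p^2 dvd v"
  shows "very_cost_effective_vertex V (zd_adj (p^2 * q^2)) (V - S) v"
proof -
  have vV: "v \<in> V"
    using v by blast
  have vK: "v \<in> pq_multiples - T"
    using v assms(2) zd_vertices_subset[of "p^2 * q^2"] unfolding S_def pq_multiples_def by auto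
  have "N v \<inter> (V - S) \<subseteq> pq_multiples - T - {v}"
    using assms(3) nbhd_subset[of V _ v] coprime_p_q
    by (auto simp: mem_nbhd_zd_iff[OF vV] S_def pq_multiples_def p2q2_dvd_mult_iff coprime_mult_dvd_iff
        dest: square_dvd_imp_dvd)
  then have "card (N v \<inter> (V - S)) < card T"
    using card_mono[OF _ \<open>N v \<inter> (V - S) \<subseteq> pq_multiples - T - {v}\<close>] finite_pq_multiples vK
      card_pq_multiples_diff_T card_T_pos by fastforce
  moreover have "T \<subseteq> N v \<inter> S"
    using vK assms(2) T_elem nbhd_subset[of V _ v]
    by (auto simp: mem_nbhd_zd_iff[OF vV] S_def p2q2_dvd_mult_iff dest: dvd_mult_left dvd_mult_right)
  then have "card T \<le> card (N v \<inter> S)"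
    using finite_nbhd_zd by (intro card_mono) auto
  ultimately show ?thesis
    unfolding very_cost_effective_vertex_def V_diff_complement by linarith
qed

text \<open>The injection is b \<mapsto> b + p q; it stays below p^2 q^2 because p q < q^2.\<close>
lemma card_q2_multiples_le_q_multiples:
  "card {b. 0 < b \<and> b < p^2 * q^2 \<and> q^2 dvd b \<and> \<not> p dvd b}
     \<le> card {b. 0 < b \<and> b < p^2 * q^2 \<and> q dvd b \<and> \<not> q^2 dvd b \<and> \<not> p dvd b}"
proof (rule card_inj_on_le)
  show "inj_on (\<lambda>b. b + p * q) {b. 0 < b \<and> b < p^2 * q^2 \<and> q^2 dvd b \<and> \<not> p dvd b}"
    by (simp add: inj_on_def)
  show "finite {b. 0 < b \<and> b < p^2 * q^2 \<and> q dvd b \<and> \<not> q^2 dvd b \<and> \<not> p dvd b}"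
    by (rule finite_subset[of _ "{..<p^2 * q^2}"]) auto
  show "(\<lambda>b. b + p * q) ` {b. 0 < b \<and> b < p^2 * q^2 \<and> q^2 dvd b \<and> \<not> p dvd b}
          \<subseteq> {b. 0 < b \<and> b < p^2 * q^2 \<and> q dvd b \<and> \<not> q^2 dvd b \<and> \<not> p dvd b}"
  proof clarify
    fix b assume b: "0 < b" "b < p^2 * q^2" "q^2 dvd b" "\<not> p dvd b"
    have "b + q^2 \<le> p^2 * q^2"
      using dvd_less_mult_imp_add_le[of "q^2" b "p^2"] b by (simp add: mult.commute)
    moreover have "p * q < q^2"
      using p_less_q q_gt_1 by (simp add: power2_eq_square)
    ultimately have "b + p * q < p^2 * q^2"
      by linarith
    moreover have "\<not> q^2 dvd b + p * q"
    proof
      assume "q^2 dvd b + p * q"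
      then have "q * q dvd q * p"
        using b(3) by (simp add: dvd_add_right_iff power2_eq_square mult.commute)
      then show False
        using q_gt_1 q_not_dvd_p by simp
    qed
    ultimately show "0 < b + p * q \<and> b + p * q < p^2 * q^2 \<and> q dvd b + p * q \<and>
        \<not> q^2 dvd b + p * q \<and> \<not> p dvd b + p * q"
      using b by (auto simp: dvd_add_left_iff dest: square_dvd_imp_dvd)
  qed
qed

lemma vertex_outside_S_p2q:
  assumes v: "v \<in> V - S" and "p^2 dvd v" "q dvd v"
  shows "very_cost_effective_vertex V (zd_adj (p^2 * q^2)) (V - S) v"
proof -
  define Q\<^sub>2 where "Q\<^sub>2 = {b. 0 < b \<and> b < p^2 * q^2 \<and> q^2 dvd b \<and> \<not> p dvd b}"
  define Q\<^sub>1 where "Q\<^sub>1 = {b. 0 < b \<and> b < p^2 * q^2 \<and> q dvd b \<and> \<not> q^2 dvd b \<and> \<not> p dvd b}"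
  have vV: "v \<in> V"
    using v by blast
  have "\<not> q^2 dvd v"
    using assms(2) zd_vertex_not_multiple[OF vV] coprime_p_q by (auto simp: coprime_mult_dvd_iff)
  have "p * q dvd v"
    using assms(2,3) coprime_p_q by (simp add: coprime_mult_dvd_iff square_dvd_imp_dvd)
  then have vK: "v \<in> pq_multiples - T"
    using v zd_vertices_subset[of "p^2 * q^2"] unfolding S_def pq_multiples_def by auto
  have "N v \<inter> (V - S) \<subseteq> (pq_multiples - T - {v}) \<union> Q\<^sub>2"
    using assms(3) \<open>\<not> q^2 dvd v\<close> nbhd_subset[of V _ v] coprime_p_q
    by (auto simp: mem_nbhd_zd_iff[OF vV] S_def pq_multiples_def Q\<^sub>2_def p2q2_dvd_mult_iff
        coprime_mult_dvd_iff)
  then have "card (N v \<inter> (V - S)) \<le> (card T - 1) + card Q\<^sub>2"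
    using card_mono[OF _ \<open>N v \<inter> (V - S) \<subseteq> _\<close>] card_Un_le[of "pq_multiples - T - {v}" Q\<^sub>2]
      finite_pq_multiples vK card_pq_multiples_diff_T
    by (simp add: Q\<^sub>2_def finite_subset[of _ "{..<p^2 * q^2}"])
  moreover have "card (T \<union> Q\<^sub>1) \<le> card (N v \<inter> S)"
  proof (intro card_mono)
    have "T \<union> Q\<^sub>1 \<subseteq> N v"
      using vK assms(2,3) square_dvd_imp_dvd[OF assms(2)] T_elem
      by (auto simp: mem_nbhd_zd_iff[OF vV] Q\<^sub>1_def p2q2_dvd_mult_iff dest: dvd_mult_left dvd_mult_right)
    moreover from this have "Q\<^sub>1 \<subseteq> S"
      using nbhd_subset[of V _ v] by (auto simp: S_def Q\<^sub>1_def dest: dvd_mult_left)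
    ultimately show "T \<union> Q\<^sub>1 \<subseteq> N v \<inter> S"
      by (auto simp: S_def)
  qed (simp add: finite_nbhd_zd)
  moreover have "card (T \<union> Q\<^sub>1) = card T + card Q\<^sub>1"
    using finite_T T_elem
    by (intro card_Un_disjoint) (auto simp: Q\<^sub>1_def finite_subset[of _ "{..<p^2 * q^2}"])
  moreover have "card Q\<^sub>2 \<le> card Q\<^sub>1"
    unfolding Q\<^sub>1_def Q\<^sub>2_def by (rule card_q2_multiples_le_q_multiples)
  ultimately show ?thesis
    using card_T_pos unfolding very_cost_effective_vertex_def V_diff_complement by linarith
qed

lemma vertex_outside_S_q2:
  assumes v: "v \<in> V - S" and "\<not> p dvd v" "q^2 dvd v"
  shows "very_cost_effective_vertex V (zd_adj (p^2 * q^2)) (V - S) v"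
proof -
  define P where "P = {b. 0 < b \<and> b < p^2 * q * q \<and> p^2 * q dvd b}"
  define R where "R = {b. 0 < b \<and> b < p^2 * q * q \<and> p^2 dvd b \<and> \<not> p^2 * q dvd b}"
  have vV: "v \<in> V"
    using v by blast
  have n: "p^2 * q^2 = p^2 * q * q"
    by (simp add: power2_eq_square)
  have "N v \<inter> (V - S) \<subseteq> P"
    using assms(2) nbhd_subset[of V _ v] coprime_p_q
    by (auto simp: mem_nbhd_zd_iff[OF vV] S_def P_def n[symmetric] p2q2_dvd_mult_iff
        coprime_mult_dvd_iff dest: square_dvd_imp_dvd)
  then have "card (N v \<inter> (V - S)) \<le> q - 1"
    using card_mono[of P] card_multiples_below[of "p^2 * q" q] p_gt_1 q_gt_1
    unfolding P_def by fastforce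
  moreover have "R \<subseteq> N v \<inter> S"
  proof
    fix b assume b: "b \<in> R"
    then have "\<not> q dvd b"
      using coprime_p_q by (auto simp: R_def coprime_mult_dvd_iff)
    moreover have "p dvd b"
      using b by (auto simp: R_def dest: square_dvd_imp_dvd)
    moreover have "b \<in> N v"
      using b assms(2,3) \<open>p dvd b\<close>
      by (auto simp: R_def n[symmetric] mem_nbhd_zd_iff[OF vV] p2q2_dvd_mult_iff)
    ultimately show "b \<in> N v \<inter> S"
      using nbhd_subset[of V _ v] by (auto simp: S_def dest: dvd_mult_right)
  qed
  then have "(q * q - 1) - (q - 1) \<le> card (N v \<inter> S)"
    using card_mono[OF _ \<open>R \<subseteq> N v \<inter> S\<close>] finite_nbhd_zd
      card_multiples_not_multiples[of "p^2" q q] p_gt_1 q_gt_1 unfolding R_def by simp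
  moreover have "q - 1 < (q * q - 1) - (q - 1)"
    using q_gt_1 mult_le_mono1[of 2 q q] by arith
  ultimately show ?thesis
    unfolding very_cost_effective_vertex_def V_diff_complement by linarith
qed

lemma V_diff_S_cases:
  assumes "v \<in> V - S"
  obtains "p * q dvd v" "\<not> p^2 dvd v" | "p^2 dvd v" "q dvd v" | "\<not> p dvd v" "q^2 dvd v"
  using assms coprime_p_q by (auto simp: S_def coprime_mult_dvd_iff)

theorem very_cost_effective_zd_p2q2: "very_cost_effective_graph V (zd_adj (p^2 * q^2))"
proof (rule very_cost_effective_graphI[OF S_subset_V])
  show "very_cost_effective_vertex V (zd_adj (p^2 * q^2)) S v" if "v \<in> S" for v
    using that vertex_in_T vertex_in_S_minus_T by blast
  show "very_cost_effective_vertex V (zd_adj (p^2 * q^2)) (V - S) v" if "v \<in> V - S" for v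
    using vertex_outside_S_pq[OF that] vertex_outside_S_p2q[OF that] vertex_outside_S_q2[OF that]
    by (cases rule: V_diff_S_cases[OF that]) blast+
qed

end

theorem mainTheorem3:
  fixes p q :: nat
  assumes "prime p" and "prime q" and "p \<noteq> q"
  shows "very_cost_effective_graph (zd_vertices (p^2 * q)) (zd_adj (p^2 * q)) \<and>
         (3 \<le> p \<and> 3 \<le> q \<and> p < q \<longrightarrow>
          very_cost_effective_graph (zd_vertices (p^2 * q^2)) (zd_adj (p^2 * q^2)))"
proof -
  interpret two_primes p q
    using assms by unfold_locales
  have "very_cost_effective_graph (zd_vertices (p^2 * q^2)) (zd_adj (p^2 * q^2))"
    if large: "3 \<le> p" "3 \<le> q" "p < q"
  proof -
    obtain T where "T \<subseteq> pq_unit_multiples" "2 * card T = p * q - 1"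
      using obtain_half_of_pq_unit_multiples[OF large(1,2)] .
    then interpret p2q2_split p q T
      using large(3) by unfold_locales
    show ?thesis
      by (rule very_cost_effective_zd_p2q2)
  qed
  then show ?thesis
    using very_cost_effective_zd_p2q by blast
qed

end
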